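(* If an ES combination operator $\nabla$ satisfies (ESF7) and (ESF8W), then $\nabla$ satisfies (ESF-P).
   Context: Setting: epistemic space $(\mathcal E,B,\mathcal L_{\mathcal P})$ ($\mathcal E$ nonempty, $B:\mathcal E\to$ propositional formulas over finite $\mathcal P$, image modulo equivalence exactly the consistent formulas); agents: well-ordered set $\mathcal S$; society: nonempty finite $N\subseteq\mathcal S$; $N$-profile $\Phi:N\to\mathcal E$, $E_i=\Phi(i)$, identified with $E_i$ if $N=\{i\}$; $\Phi\upharpoonright_M$ restriction; partition $\{N_1,N_2\}$: nonempty disjoint parts with union $N$. An ES combination operator maps (profile, $E$) to $\nabla(\Phi,E)\in\mathcal E$. (ESF7): $B(\nabla(\Phi\upharpoonright_{N_1},E))\wedge B(\nabla(\Phi\upharpoonright_{N_2},E))\vdash B(\nabla(\Phi,E))$ for all partitions, profiles, $E$. (ESF8W): if $B(\nabla(\Phi\upharpoonright_{N_1},E))\wedge B(\nabla(\Phi\upharpoonright_{N_2},E))\nvdash\bot$ then $B(\nabla(\Phi,E))\vdash B(\nabla(\Phi\upharpoonright_{N_1},E))\vee B(\nabla(\Phi\upharpoonright_{N_2},E))$. (ESF-P): for every society $N$, $N$-profile $\Phi$ and $E,E'\in\mathcal E$, if $\bigwedge_{i\in N}B(\nabla(E_i,E))\nvdash\bot$ and $B(\nabla(E_i,E))\wedge B(E')\vdash\bot$ for all $i\in N$, then $B(\nabla(\Phi,E))\wedge B(E')\vdash\bot$. *)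

theory Defs
  imports Main
begin

datatype 'p form =
    Atom 'p | FBot | FNeg "'p form" | FAnd "'p form" "'p form"
  | FOr "'p form" "'p form" | FImp "'p form" "'p form"

primrec sat :: "('p \<Rightarrow> bool) \<Rightarrow> 'p form \<Rightarrow> bool" where
  "sat v (Atom p) = v p"
| "sat v FBot = False"
| "sat v (FNeg f) = (\<not> sat v f)"
| "sat v (FAnd f g) = (sat v f \<and> sat v g)"
| "sat v (FOr f g) = (sat v f \<or> sat v g)"
| "sat v (FImp f g) = (sat v f \<longrightarrow> sat v g)"

text \<open>Classical entailment (by completeness, semantic), written f \<turnstile> g.\<close>
definition entails :: "'p form \<Rightarrow> 'p form \<Rightarrow> bool" (infix "\<turnstile>" 55) where
  "f \<turnstile> g \<longleftrightarrow> (\<forall>v. sat v f \<longrightarrow> sat v g)"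

definition consistent :: "'p form \<Rightarrow> bool" where
  "consistent f \<longleftrightarrow> \<not> (f \<turnstile> FBot)"

definition equiv_form :: "'p form \<Rightarrow> 'p form \<Rightarrow> bool" where
  "equiv_form f g \<longleftrightarrow> (f \<turnstile> g \<and> g \<turnstile> f)"

definition consistent_set :: "'p form set \<Rightarrow> bool" where
  "consistent_set \<Gamma> \<longleftrightarrow> (\<exists>v. \<forall>f\<in>\<Gamma>. sat v f)"

text \<open>Epistemic states form the (nonempty) type 'e; the atoms form a finite type 'p.
  B maps each state to a formula; its image modulo equivalence is exactly the
  consistent formulas.\<close>
definition epistemic_space :: "('e \<Rightarrow> 'p::finite form) \<Rightarrow> bool" where
  "epistemic_space B \<longleftrightarrow>
     (\<forall>E. consistent (B E)) \<and> (\<forall>f. consistent f \<longrightarrow> (\<exists>E. equiv_form (B E) f))"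

text \<open>An N-profile is a partial map from agents to states whose domain N
  (the society) is finite and nonempty. Restriction is map restriction;
  the single-agent profile of E_i is [i \<mapsto> E_i].\<close>
definition profile :: "('s \<rightharpoonup> 'e) \<Rightarrow> bool" where
  "profile \<Phi> \<longleftrightarrow> finite (dom \<Phi>) \<and> dom \<Phi> \<noteq> {}"

definition partition2 :: "'s set \<Rightarrow> 's set \<Rightarrow> 's set \<Rightarrow> bool" where
  "partition2 N N1 N2 \<longleftrightarrow> N1 \<noteq> {} \<and> N2 \<noteq> {} \<and> N1 \<inter> N2 = {} \<and> N1 \<union> N2 = N"

definition ESF7 :: "('e \<Rightarrow> 'p form) \<Rightarrow> (('s \<rightharpoonup> 'e) \<Rightarrow> 'e \<Rightarrow> 'e) \<Rightarrow> bool" where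
  "ESF7 B nabla \<longleftrightarrow>
    (\<forall>\<Phi> N1 N2 E. profile \<Phi> \<longrightarrow> partition2 (dom \<Phi>) N1 N2 \<longrightarrow>
       FAnd (B (nabla (\<Phi> |` N1) E)) (B (nabla (\<Phi> |` N2) E)) \<turnstile> B (nabla \<Phi> E))"

definition ESF8W :: "('e \<Rightarrow> 'p form) \<Rightarrow> (('s \<rightharpoonup> 'e) \<Rightarrow> 'e \<Rightarrow> 'e) \<Rightarrow> bool" where
  "ESF8W B nabla \<longleftrightarrow>
    (\<forall>\<Phi> N1 N2 E. profile \<Phi> \<longrightarrow> partition2 (dom \<Phi>) N1 N2 \<longrightarrow>
       consistent (FAnd (B (nabla (\<Phi> |` N1) E)) (B (nabla (\<Phi> |` N2) E))) \<longrightarrow>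
       B (nabla \<Phi> E) \<turnstile> FOr (B (nabla (\<Phi> |` N1) E)) (B (nabla (\<Phi> |` N2) E)))"

definition ESF_P :: "('e \<Rightarrow> 'p form) \<Rightarrow> (('s \<rightharpoonup> 'e) \<Rightarrow> 'e \<Rightarrow> 'e) \<Rightarrow> bool" where
  "ESF_P B nabla \<longleftrightarrow>
    (\<forall>\<Phi> E E'. profile \<Phi> \<longrightarrow>
       consistent_set ((\<lambda>i. B (nabla [i \<mapsto> the (\<Phi> i)] E)) ` dom \<Phi>) \<longrightarrow>
       (\<forall>i\<in>dom \<Phi>. FAnd (B (nabla [i \<mapsto> the (\<Phi> i)] E)) (B E') \<turnstile> FBot) \<longrightarrow>
       FAnd (B (nabla \<Phi> E)) (B E') \<turnstile> FBot)"

end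

theory Submission
  imports Defs
begin

text \<open>Split a profile into one agent and the rest. By (ESF7) every valuation satisfying all
  individual revisions satisfies the combination; so when the individual revisions are jointly
  consistent, the two parts of each split are consistent together, (ESF8W) applies, and by
  induction every model of the combination is a model of some individual revision. A belief
  incompatible with every individual revision is therefore incompatible with the combination.\<close>

lemma restrict_map_singleton: "i \<in> dom \<Phi> \<Longrightarrow> \<Phi> |` {i} = [i \<mapsto> the (\<Phi> i)]"
  by (auto simp: restrict_map_def fun_eq_iff)

lemma dom_eq_singleton_map: "dom \<Phi> = {i} \<Longrightarrow> \<Phi> = [i \<mapsto> the (\<Phi> i)]"
  by (simp add: fun_eq_iff set_eq_iff) (metis domIff option.collapse)

lemma profile_induct [consumes 1, case_names single split]:
  assumes "profile \<Phi>"
    and single: "\<And>\<Phi> i. dom \<Phi> = {i} \<Longrightarrow> P \<Phi>"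
    and split: "\<And>\<Phi> i. profile \<Phi> \<Longrightarrow> i \<in> dom \<Phi> \<Longrightarrow> dom \<Phi> \<noteq> {i} \<Longrightarrow>
                  P (\<Phi> |` (dom \<Phi> - {i})) \<Longrightarrow> P \<Phi>"
  shows "P \<Phi>"
proof -
  have "finite (dom \<Phi>)" "dom \<Phi> \<noteq> {}"
    using assms(1) by (auto simp: profile_def)
  moreover have "\<forall>\<Phi>. dom \<Phi> = N \<longrightarrow> P \<Phi>" if "finite N" "N \<noteq> {}" for N
    using that
  proof (induction N rule: finite_ne_induct)
    case (singleton i)
    then show ?case using single by blast
  next
    case (insert i F)
    show ?case
    proof (intro allI impI)
      fix \<Phi> :: "'a \<rightharpoonup> 'b" assume dom: "dom \<Phi> = insert i F"
      have "dom (\<Phi> |` (dom \<Phi> - {i})) = F"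
        using dom insert.hyps by auto
      then have "P (\<Phi> |` (dom \<Phi> - {i}))"
        using insert.IH by blast
      moreover have "profile \<Phi>"
        using dom insert.hyps(1) by (simp add: profile_def)
      moreover have "i \<in> dom \<Phi>" "dom \<Phi> \<noteq> {i}"
        using dom insert.hyps by auto
      ultimately show "P \<Phi>"
        using split by blast
    qed
  qed
  ultimately show ?thesis by blast
qed

lemma partition2_singleton:
  "i \<in> N \<Longrightarrow> N \<noteq> {i} \<Longrightarrow> partition2 N {i} (N - {i})"
  by (auto simp: partition2_def)

lemma ESF7_sat_combination:
  assumes ESF7: "ESF7 B nabla"
    and "profile \<Phi>"
    and "\<forall>i\<in>dom \<Phi>. sat v (B (nabla [i \<mapsto> the (\<Phi> i)] E))"
  shows "sat v (B (nabla \<Phi> E))"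
  using assms(2,3)
proof (induction \<Phi> rule: profile_induct)
  case (single \<Phi> i)
  then have "sat v (B (nabla [i \<mapsto> the (\<Phi> i)] E))" by blast
  then show ?case
    by (rule ssubst[OF dom_eq_singleton_map[OF single.hyps]])
next
  case (split \<Phi> i)
  let ?rest = "\<Phi> |` (dom \<Phi> - {i})"
  have "partition2 (dom \<Phi>) {i} (dom \<Phi> - {i})"
    using split.hyps(2,3) by (rule partition2_singleton)
  then have "FAnd (B (nabla (\<Phi> |` {i}) E)) (B (nabla ?rest E)) \<turnstile> B (nabla \<Phi> E)"
    using ESF7 split.hyps(1) unfolding ESF7_def by blast
  moreover have "sat v (B (nabla (\<Phi> |` {i}) E))"
    unfolding restrict_map_singleton[OF split.hyps(2)] using split.prems split.hyps(2) by blast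
  moreover have "sat v (B (nabla ?rest E))"
    using split.IH split.prems by auto
  ultimately show ?case
    by (simp add: entails_def)
qed

lemma ESF8W_sat_individual:
  assumes ESF7: "ESF7 B nabla" and ESF8W: "ESF8W B nabla"
    and "profile \<Phi>"
    and "\<forall>i\<in>dom \<Phi>. sat u (B (nabla [i \<mapsto> the (\<Phi> i)] E))"
    and "sat v (B (nabla \<Phi> E))"
  shows "\<exists>i\<in>dom \<Phi>. sat v (B (nabla [i \<mapsto> the (\<Phi> i)] E))"
  using assms(3-5)
proof (induction \<Phi> rule: profile_induct)
  case (single \<Phi> i)
  then show ?case
    by (metis dom_eq_singleton_map singletonI)
next
  case (split \<Phi> i)
  let ?rest = "\<Phi> |` (dom \<Phi> - {i})"
  have part: "partition2 (dom \<Phi>) {i} (dom \<Phi> - {i})"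
    using split.hyps(2,3) by (rule partition2_singleton)
  have "profile ?rest"
    using split.hyps by (auto simp: profile_def)
  moreover have "\<forall>j\<in>dom ?rest. sat u (B (nabla [j \<mapsto> the (?rest j)] E))"
    using split.prems(1) by (simp del: fun_upd_apply)
  ultimately have "sat u (B (nabla ?rest E))"
    by (rule ESF7_sat_combination[OF ESF7])
  moreover have "sat u (B (nabla (\<Phi> |` {i}) E))"
    unfolding restrict_map_singleton[OF split.hyps(2)] using split.prems(1) split.hyps(2) by blast
  ultimately have "consistent (FAnd (B (nabla (\<Phi> |` {i}) E)) (B (nabla ?rest E)))"
    by (auto simp: consistent_def entails_def)
  then have "B (nabla \<Phi> E) \<turnstile> FOr (B (nabla (\<Phi> |` {i}) E)) (B (nabla ?rest E))"
    using ESF8W split.hyps(1) part unfolding ESF8W_def by blast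
  then have "sat v (B (nabla (\<Phi> |` {i}) E)) \<or> sat v (B (nabla ?rest E))"
    using split.prems(2) by (auto simp: entails_def)
  then show ?case
  proof
    assume "sat v (B (nabla (\<Phi> |` {i}) E))"
    then show ?case
      unfolding restrict_map_singleton[OF split.hyps(2)] using split.hyps(2) by blast
  next
    assume "sat v (B (nabla ?rest E))"
    then show ?case
      using split.IH split.prems(1) by auto
  qed
qed

theorem mainTheorem9:
  fixes B :: "'e \<Rightarrow> 'p::finite form"
    and nabla :: "('s::wellorder \<rightharpoonup> 'e) \<Rightarrow> 'e \<Rightarrow> 'e"
  assumes "epistemic_space B"
    and "ESF7 B nabla"
    and "ESF8W B nabla"
  shows "ESF_P B nabla"
  unfolding ESF_P_def
proof (intro allI impI)
  fix \<Phi> :: "'s \<rightharpoonup> 'e" and E E'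
  assume "profile \<Phi>"
    and "consistent_set ((\<lambda>i. B (nabla [i \<mapsto> the (\<Phi> i)] E)) ` dom \<Phi>)"
    and incompatible: "\<forall>i\<in>dom \<Phi>. FAnd (B (nabla [i \<mapsto> the (\<Phi> i)] E)) (B E') \<turnstile> FBot"
  then obtain u where "\<forall>i\<in>dom \<Phi>. sat u (B (nabla [i \<mapsto> the (\<Phi> i)] E))"
    by (auto simp: consistent_set_def)
  then have "\<exists>i\<in>dom \<Phi>. sat v (B (nabla [i \<mapsto> the (\<Phi> i)] E))"
    if "sat v (B (nabla \<Phi> E))" for v
    using ESF8W_sat_individual[OF assms(2,3) \<open>profile \<Phi>\<close>] that by blast
  with incompatible show "FAnd (B (nabla \<Phi> E)) (B E') \<turnstile> FBot"
    by (fastforce simp: entails_def)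
qed

end
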